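(* Let code 1 be a stabiliser code with disjointness $\delta_1$ and let code 2 be a stabiliser code encoding one logical qubit with disjointness $\delta_2$. Let the concatenated code be obtained by encoding each physical qubit of code 1 into a block of code 2, and let $\Delta$ be its disjointness. Then $\Delta\ge\delta_1\delta_2$.
   Context: Disjointness of a stabiliser code: for an integer $c\ge1$, a collection of representatives of a logical operator is $c$-disjoint if no physical qubit lies in the support of more than $c$ of them; the unnormalised $c$-disjointness $\Delta'_c$ is the largest integer such that every logical Pauli operator admits at least $\Delta'_c$ representatives forming a $c$-disjoint collection; the (normalised) $c$-disjointness is $\Delta_c=\Delta'_c/c$, and the disjointness is $\Delta=\max_{c\in\mathbb{Z}_+}\Delta_c$. *)

theory Defs
  imports "HOL-Library.Extended_Real"
begin

text \<open>Pauli operators on a finite set of qubits of type 'q, modulo phases,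
  in the binary symplectic representation: (x-part, z-part).
  I = (0,0), X = (1,0), Z = (0,1), Y = (1,1) on each qubit.\<close>
type_synonym 'q pauli = "('q \<Rightarrow> bool) \<times> ('q \<Rightarrow> bool)"

definition pid :: "'q pauli" where
  "pid = (\<lambda>_. False, \<lambda>_. False)"

definition pmult :: "'q pauli \<Rightarrow> 'q pauli \<Rightarrow> 'q pauli" where
  "pmult P Q = (\<lambda>q. fst P q \<noteq> fst Q q, \<lambda>q. snd P q \<noteq> snd Q q)"

definition commute :: "'q::finite pauli \<Rightarrow> 'q pauli \<Rightarrow> bool" where
  "commute P Q \<longleftrightarrow>
     even (card {q. (fst P q \<and> snd Q q) \<noteq> (snd P q \<and> fst Q q)})"

definition support :: "'q pauli \<Rightarrow> 'q set" where
  "support P = {q. fst P q \<or> snd P q}"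

text \<open>A stabiliser code on the qubits 'q, given by its stabiliser group
  modulo phases: a group of pairwise commuting Pauli operators.\<close>
definition stabiliser_code :: "'q::finite pauli set \<Rightarrow> bool" where
  "stabiliser_code S \<longleftrightarrow> pid \<in> S \<and> (\<forall>a\<in>S. \<forall>b\<in>S. pmult a b \<in> S)
     \<and> (\<forall>a\<in>S. \<forall>b\<in>S. commute a b)"

definition encodes_logical_qubits :: "'q::finite pauli set \<Rightarrow> nat \<Rightarrow> bool" where
  "encodes_logical_qubits S k \<longleftrightarrow> card S * 2 ^ k = 2 ^ card (UNIV :: 'q set)"

text \<open>Logical Pauli operators: the normaliser (= centraliser modulo phases).\<close>
definition normaliser :: "'q::finite pauli set \<Rightarrow> 'q pauli set" where
  "normaliser S = {P. \<forall>s\<in>S. commute P s}"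

definition representative :: "'q pauli set \<Rightarrow> 'q pauli \<Rightarrow> 'q pauli \<Rightarrow> bool" where
  "representative S P Q \<longleftrightarrow> pmult Q P \<in> S"

definition c_disjoint :: "nat \<Rightarrow> (nat \<Rightarrow> 'q pauli) \<Rightarrow> nat \<Rightarrow> bool" where
  "c_disjoint c R m \<longleftrightarrow> (\<forall>q. card {i. i < m \<and> q \<in> support (R i)} \<le> c)"

definition udisj :: "'q::finite pauli set \<Rightarrow> nat \<Rightarrow> enat" where
  "udisj S c = Sup {enat m | m. \<forall>P\<in>normaliser S. \<exists>R.
      (\<forall>i<m. representative S P (R i)) \<and> c_disjoint c R m}"

definition disj_c :: "'q::finite pauli set \<Rightarrow> nat \<Rightarrow> ereal" where
  "disj_c S c = ereal_of_enat (udisj S c) / ereal (real c)"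

definition disjointness :: "'q::finite pauli set \<Rightarrow> ereal" where
  "disjointness S = (SUP c\<in>{1..}. disj_c S c)"

text \<open>Encoding a Pauli operator on the qubits of code 1 into the blocks of
  code 2, using chosen logical operators xb (X-bar) and zb (Z-bar) of code 2.\<close>
definition encode :: "'b pauli \<Rightarrow> 'b pauli \<Rightarrow> 'a pauli \<Rightarrow> ('a \<times> 'b) pauli" where
  "encode xb zb P =
     (\<lambda>(q, j). (fst P q \<and> fst xb j) \<noteq> (snd P q \<and> fst zb j),
      \<lambda>(q, j). (fst P q \<and> snd xb j) \<noteq> (snd P q \<and> snd zb j))"

definition block :: "('a \<times> 'b) pauli \<Rightarrow> 'a \<Rightarrow> 'b pauli" where
  "block P q = (\<lambda>j. fst P (q, j), \<lambda>j. snd P (q, j))"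

definition concat_code ::
  "'a::finite pauli set \<Rightarrow> 'b::finite pauli set \<Rightarrow> 'b pauli \<Rightarrow> 'b pauli \<Rightarrow> ('a \<times> 'b) pauli set" where
  "concat_code S1 S2 xb zb =
     {pmult (encode xb zb s) b | s b. s \<in> S1 \<and> (\<forall>q. block b q \<in> S2)}"

end

theory Submission
  imports Defs "HOL-Library.Cardinality"
begin

text \<open>Let \<open>P\<close> be a logical operator of the concatenated code. On each block \<open>q\<close> it is a
  logical operator of code 2; as code 2 encodes one qubit, it is a stabiliser times
  \<open>xb^a zb^b\<close>, where \<open>a\<close> and \<open>b\<close> are detected by anticommutation with \<open>zb\<close> and \<open>xb\<close>.
  The pairs \<open>(a, b)\<close> form a logical operator \<open>L\<close> of code 1. Take \<open>m1\<close> \<open>c1\<close>-disjoint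
  representatives of \<open>L\<close> and, for every single-qubit logical, \<open>m2\<close> \<open>c2\<close>-disjoint
  representatives in code 2. Replacing each single-qubit factor of a representative of \<open>L\<close>
  by one of the latter gives \<open>m1 * m2\<close> representatives of \<open>P\<close>, and a qubit of block \<open>q\<close>
  lies in at most \<open>c1 * c2\<close> of them: at most \<open>c1\<close> representatives of \<open>L\<close> touch \<open>q\<close>, and
  for each at most \<open>c2\<close> of the inner ones touch the qubit. Hence the \<open>c1 * c2\<close>-disjointness
  of the concatenated code is at least the product of the \<open>c1\<close>- and \<open>c2\<close>-disjointness,
  and the theorem follows by taking suprema.\<close>

section \<open>Commutation of Pauli operators\<close>

lemma odd_card_Collect_xor:
  fixes A B :: "'q::finite \<Rightarrow> bool"
  shows "odd (card {q. A q \<noteq> B q}) \<longleftrightarrow> odd (card {q. A q}) \<noteq> odd (card {q. B q})"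
proof -
  have "card {q. A q} + card {q. B q} = card ({q. A q} \<union> {q. B q}) + card {q. A q \<and> B q}"
    by (subst card_Un_Int) (auto simp: Collect_conj_eq)
  moreover have "{q. A q} \<union> {q. B q} = {q. A q \<noteq> B q} \<union> {q. A q \<and> B q}"
    by auto
  then have "card ({q. A q} \<union> {q. B q}) = card {q. A q \<noteq> B q} + card {q. A q \<and> B q}"
    by (simp add: card_Un_disjoint disjoint_iff)
  ultimately have "card {q. A q} + card {q. B q} = card {q. A q \<noteq> B q} + 2 * card {q. A q \<and> B q}"
    by simp
  moreover have "odd x \<longleftrightarrow> odd a \<noteq> odd b" if "a + b = x + 2 * y" for a b x y :: nat
    using that by presburger
  ultimately show ?thesis
    by blast
qed

lemma pmult_assoc: "pmult (pmult a b) c = pmult a (pmult b c)"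
  by (auto simp: pmult_def)

lemma pmult_commute: "pmult a b = pmult b a"
  by (auto simp: pmult_def)

lemma pmult_left_commute: "pmult a (pmult b c) = pmult b (pmult a c)"
  by (auto simp: pmult_def)

lemmas pmult_ac = pmult_assoc pmult_commute pmult_left_commute

lemma pmult_self [simp]: "pmult a a = pid"
  by (auto simp: pmult_def pid_def)

lemma pmult_pid [simp]: "pmult pid a = a" "pmult a pid = a"
  by (auto simp: pmult_def pid_def)

lemma pmult_cancel [simp]: "pmult a (pmult a b) = b" "pmult (pmult b a) a = b"
  by (simp_all flip: pmult_assoc) (simp add: pmult_assoc)

definition anticommute :: "'q::finite pauli \<Rightarrow> 'q pauli \<Rightarrow> bool" where
  "anticommute P Q \<longleftrightarrow> \<not> commute P Q"

lemma anticommute_iff_odd_card: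
  "anticommute P Q \<longleftrightarrow> odd (card {q. (fst P q \<and> snd Q q) \<noteq> (snd P q \<and> fst Q q)})"
  by (simp add: anticommute_def commute_def)

lemma mem_normaliser_iff: "P \<in> normaliser S \<longleftrightarrow> (\<forall>s\<in>S. \<not> anticommute P s)"
  by (simp add: normaliser_def anticommute_def)

lemma anticommute_pmult_left:
  "anticommute (pmult a b) c \<longleftrightarrow> anticommute a c \<noteq> anticommute b c"
proof -
  have "{q. (fst (pmult a b) q \<and> snd c q) \<noteq> (snd (pmult a b) q \<and> fst c q)}
      = {q. ((fst a q \<and> snd c q) \<noteq> (snd a q \<and> fst c q))
          \<noteq> ((fst b q \<and> snd c q) \<noteq> (snd b q \<and> fst c q))}"
    by (auto simp: pmult_def)
  then show ?thesis
    unfolding anticommute_iff_odd_card by (simp only: odd_card_Collect_xor)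
qed

lemma anticommute_sym: "anticommute a b \<longleftrightarrow> anticommute b a"
proof -
  have "{q. (fst a q \<and> snd b q) \<noteq> (snd a q \<and> fst b q)}
      = {q. (fst b q \<and> snd a q) \<noteq> (snd b q \<and> fst a q)}"
    by auto
  then show ?thesis
    by (simp add: anticommute_iff_odd_card)
qed

lemma anticommute_pmult_right:
  "anticommute c (pmult a b) \<longleftrightarrow> anticommute c a \<noteq> anticommute c b"
  by (simp add: anticommute_sym[of c] anticommute_pmult_left)

lemma anticommute_self [simp]: "\<not> anticommute a a"
proof -
  have "{q. (fst a q \<and> snd a q) \<noteq> (snd a q \<and> fst a q)} = {}"
    by auto
  then show ?thesis
    by (simp add: anticommute_iff_odd_card)
qed

lemma anticommute_pid [simp]: "\<not> anticommute pid a" "\<not> anticommute a pid"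
  by (simp_all add: anticommute_iff_odd_card pid_def)

lemma exists_anticommute:
  fixes t :: "'q::finite pauli"
  assumes "t \<noteq> pid"
  shows "\<exists>P. anticommute P t"
proof -
  obtain q where "fst t q \<or> snd t q"
    using assms by (cases t) (auto simp: pid_def)
  then consider "snd t q" | "fst t q"
    by blast
  then show ?thesis
  proof cases
    case 1
    then have "{q'. (q' = q \<and> snd t q') \<noteq> (False \<and> fst t q')} = {q}"
      by auto
    then have "anticommute (\<lambda>q'. q' = q, \<lambda>_. False) t"
      by (simp add: anticommute_iff_odd_card)
    then show ?thesis ..
  next
    case 2
    then have "{q'. (False \<and> snd t q') \<noteq> (q' = q \<and> fst t q')} = {q}"
      by auto
    then have "anticommute (\<lambda>_. False, \<lambda>q'. q' = q) t"
      by (simp add: anticommute_iff_odd_card)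
    then show ?thesis ..
  qed
qed

lemma sum_eq_0_if_negated_by_bij:
  fixes f :: "'x \<Rightarrow> int"
  assumes "bij_betw h A A" and "\<And>x. x \<in> A \<Longrightarrow> f (h x) = - f x"
  shows "sum f A = 0"
proof -
  have "sum f A = (\<Sum>x\<in>A. f (h x))"
    using sum.reindex_bij_betw[OF assms(1), of f] by simp
  also have "\<dots> = - sum f A"
    using assms(2) by (simp add: sum_negf)
  finally show ?thesis
    by simp
qed

lemma bij_betw_pmult:
  assumes "\<And>a b. a \<in> T \<Longrightarrow> b \<in> T \<Longrightarrow> pmult a b \<in> T" and "t \<in> T"
  shows "bij_betw (\<lambda>a. pmult a t) T T"
  by (rule bij_betw_byWitness[where f'="\<lambda>a. pmult a t"]) (auto simp: assms)

lemma card_pauli: "CARD('q::finite pauli) = 2 ^ CARD('q) * 2 ^ CARD('q)"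
  by (simp add: card_fun flip: UNIV_Times_UNIV card_cartesian_product)

text \<open>Double counting of \<open>\<Sum>t\<in>T. \<Sum>D. (-1)^[D anticommutes with t]\<close>: the inner sum
  over all Paulis vanishes unless \<open>t = pid\<close>, the sum over the group \<open>T\<close> vanishes unless
  \<open>D\<close> commutes with all of \<open>T\<close>.\<close>
lemma card_normaliser_mult_card:
  fixes T :: "'q::finite pauli set"
  assumes pid: "pid \<in> T" and closed: "\<And>a b. a \<in> T \<Longrightarrow> b \<in> T \<Longrightarrow> pmult a b \<in> T"
  shows "card (normaliser T) * card T = 2 ^ CARD('q) * 2 ^ CARD('q)"
proof -
  define \<chi> where "\<chi> D t = (if anticommute D t then -1 else 1 :: int)" for D t :: "'q pauli"
  have sum_all: "(\<Sum>D\<in>UNIV. \<chi> D t) = (if t = pid then int CARD('q pauli) else 0)" for t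
  proof (cases "t = pid")
    case False
    then obtain P where "anticommute P t"
      using exists_anticommute by blast
    then have "(\<Sum>D\<in>UNIV. \<chi> D t) = 0"
      by (intro sum_eq_0_if_negated_by_bij[where h="\<lambda>D. pmult D P"] bij_betw_pmult)
        (auto simp: \<chi>_def anticommute_pmult_left)
    then show ?thesis
      using False by simp
  qed (simp add: \<chi>_def)
  have sum_group: "(\<Sum>t\<in>T. \<chi> D t) = (if D \<in> normaliser T then int (card T) else 0)" for D
  proof (cases "D \<in> normaliser T")
    case False
    then obtain t0 where "t0 \<in> T" "anticommute D t0"
      by (auto simp: mem_normaliser_iff)
    then have "(\<Sum>t\<in>T. \<chi> D t) = 0"
      by (intro sum_eq_0_if_negated_by_bij[where h="\<lambda>t. pmult t t0"] bij_betw_pmult)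
        (auto simp: \<chi>_def anticommute_pmult_right closed)
    then show ?thesis
      using False by simp
  qed (simp add: \<chi>_def mem_normaliser_iff)
  have "int CARD('q pauli) = (\<Sum>t\<in>T. \<Sum>D\<in>UNIV. \<chi> D t)"
    using pid by (simp add: sum_all)
  also have "\<dots> = (\<Sum>D\<in>UNIV. \<Sum>t\<in>T. \<chi> D t)"
    by (rule sum.swap)
  also have "\<dots> = int (card (normaliser T) * card T)"
    by (simp add: sum_group sum.If_cases Int_absorb1)
  finally have "card (normaliser T) * card T = CARD('q pauli)"
    by linarith
  then show ?thesis
    by (simp only: card_pauli)
qed

section \<open>Codes encoding one logical qubit\<close>

lemma stabiliser_codeD:
  assumes "stabiliser_code S"
  shows "pid \<in> S" and "\<And>a b. a \<in> S \<Longrightarrow> b \<in> S \<Longrightarrow> pmult a b \<in> S"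
    and "\<And>a b. a \<in> S \<Longrightarrow> b \<in> S \<Longrightarrow> \<not> anticommute a b"
  using assms by (auto simp: stabiliser_code_def anticommute_def)

definition logical_pauli :: "'b pauli \<Rightarrow> 'b pauli \<Rightarrow> bool \<Rightarrow> bool \<Rightarrow> 'b pauli" where
  "logical_pauli xb zb a b =
     (\<lambda>j. (a \<and> fst xb j) \<noteq> (b \<and> fst zb j), \<lambda>j. (a \<and> snd xb j) \<noteq> (b \<and> snd zb j))"

lemma logical_pauli_eq:
  "logical_pauli xb zb a b = pmult (if a then xb else pid) (if b then zb else pid)"
  by (auto simp: logical_pauli_def pmult_def pid_def)

lemma pmult_logical_pauli:
  "pmult (logical_pauli xb zb a b) (logical_pauli xb zb c d) = logical_pauli xb zb (a \<noteq> c) (b \<noteq> d)"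
  by (auto simp: logical_pauli_def pmult_def)

lemma logical_pauli_False [simp]: "logical_pauli xb zb False False = pid"
  by (simp add: logical_pauli_def pid_def)

lemma anticommute_logical_pauli_left:
  "anticommute (logical_pauli xb zb a b) P \<longleftrightarrow> (a \<and> anticommute xb P) \<noteq> (b \<and> anticommute zb P)"
  by (simp add: logical_pauli_eq anticommute_pmult_left)

lemma anticommute_logical_pauli_right:
  "anticommute P (logical_pauli xb zb a b) \<longleftrightarrow> (a \<and> anticommute P xb) \<noteq> (b \<and> anticommute P zb)"
  by (simp add: anticommute_sym[of P] anticommute_logical_pauli_left)

lemma anticommute_logical_pauli:
  assumes "anticommute xb zb"
  shows "anticommute (logical_pauli xb zb a b) (logical_pauli xb zb c d) \<longleftrightarrow> (a \<and> d) \<noteq> (b \<and> c)"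
  using assms anticommute_sym[of zb xb]
  by (auto simp: anticommute_logical_pauli_left anticommute_logical_pauli_right)

lemma logical_pauli_mem_normaliser:
  "xb \<in> normaliser S \<Longrightarrow> zb \<in> normaliser S \<Longrightarrow> logical_pauli xb zb a b \<in> normaliser S"
  by (simp add: mem_normaliser_iff anticommute_logical_pauli_left)

definition adjoin_logicals :: "'b pauli set \<Rightarrow> 'b pauli \<Rightarrow> 'b pauli \<Rightarrow> 'b pauli set" where
  "adjoin_logicals S xb zb = (\<lambda>(s, a, b). pmult s (logical_pauli xb zb a b)) ` (S \<times> UNIV)"

lemma pmult_mem_adjoin_logicals:
  assumes "\<And>a b. a \<in> S \<Longrightarrow> b \<in> S \<Longrightarrow> pmult a b \<in> S"
    and "x \<in> adjoin_logicals S xb zb" and "y \<in> adjoin_logicals S xb zb"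
  shows "pmult x y \<in> adjoin_logicals S xb zb"
proof -
  obtain s a b s' c d where "s \<in> S" "s' \<in> S"
    and x: "x = pmult s (logical_pauli xb zb a b)" and y: "y = pmult s' (logical_pauli xb zb c d)"
    using assms(2,3) by (auto simp: adjoin_logicals_def)
  then have "pmult x y = pmult (pmult s s') (pmult (logical_pauli xb zb a b) (logical_pauli xb zb c d))"
    by (simp add: pmult_ac)
  then have "pmult x y = pmult (pmult s s') (logical_pauli xb zb (a \<noteq> c) (b \<noteq> d))"
    by (simp add: pmult_logical_pauli)
  moreover have "pmult s s' \<in> S"
    using \<open>s \<in> S\<close> \<open>s' \<in> S\<close> assms(1) by blast
  ultimately show ?thesis
    unfolding adjoin_logicals_def by (auto intro!: image_eqI[where x="(pmult s s', a \<noteq> c, b \<noteq> d)"])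
qed

lemma logical_pauli_mem_stabiliser:
  fixes S :: "'b::finite pauli set"
  assumes "xb \<in> normaliser S" "zb \<in> normaliser S" "anticommute xb zb"
    and "logical_pauli xb zb a b \<in> S"
  shows "\<not> a \<and> \<not> b"
proof -
  have "\<not> anticommute xb (logical_pauli xb zb a b)" "\<not> anticommute zb (logical_pauli xb zb a b)"
    using assms(1,2,4) by (auto simp: mem_normaliser_iff)
  then show ?thesis
    using assms(3) anticommute_sym[of zb xb] by (simp add: anticommute_logical_pauli_right)
qed

lemma card_adjoin_logicals:
  fixes S :: "'b::finite pauli set"
  assumes closed: "\<And>a b. a \<in> S \<Longrightarrow> b \<in> S \<Longrightarrow> pmult a b \<in> S"
    and "xb \<in> normaliser S" "zb \<in> normaliser S" "anticommute xb zb"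
  shows "card (adjoin_logicals S xb zb) = 4 * card S"
proof -
  have injective: "s = s' \<and> a = c \<and> b = d"
    if "s \<in> S" "s' \<in> S" and eq: "pmult s (logical_pauli xb zb a b) = pmult s' (logical_pauli xb zb c d)"
    for s a b s' c d
  proof -
    have "pmult s s' = pmult (pmult s (logical_pauli xb zb a b)) (pmult s' (logical_pauli xb zb a b))"
      by (simp add: pmult_ac)
    also have "\<dots> = pmult (logical_pauli xb zb c d) (logical_pauli xb zb a b)"
      by (simp add: eq pmult_ac)
    finally have "logical_pauli xb zb (c \<noteq> a) (d \<noteq> b) \<in> S"
      using closed[OF that(1,2)] by (simp add: pmult_logical_pauli)
    then have "c = a \<and> d = b"
      using logical_pauli_mem_stabiliser assms(2-4) by blast
    moreover from eq have "pmult (pmult s (logical_pauli xb zb a b)) (logical_pauli xb zb a b)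
        = pmult (pmult s' (logical_pauli xb zb c d)) (logical_pauli xb zb a b)"
      by simp
    ultimately show ?thesis
      by simp
  qed
  have "inj_on (\<lambda>(s, a, b). pmult s (logical_pauli xb zb a b)) (S \<times> UNIV)"
  proof (rule inj_onI)
    fix u v assume "u \<in> S \<times> UNIV" "v \<in> S \<times> UNIV"
      and "(\<lambda>(s, a, b). pmult s (logical_pauli xb zb a b)) u = (\<lambda>(s, a, b). pmult s (logical_pauli xb zb a b)) v"
    moreover obtain s a b s' c d where "u = (s, a, b)" "v = (s', c, d)"
      by (metis prod_cases3)
    ultimately show "u = v"
      using injective[of s s' a b c d] by simp
  qed
  then show ?thesis
    by (simp add: adjoin_logicals_def card_image card_cartesian_product)
qed

lemma mem_normaliser_adjoin_logicals:
  "D \<in> normaliser S \<Longrightarrow> \<not> anticommute D xb \<Longrightarrow> \<not> anticommute D zb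
    \<Longrightarrow> D \<in> normaliser (adjoin_logicals S xb zb)"
  by (auto simp: mem_normaliser_iff adjoin_logicals_def anticommute_pmult_right
      anticommute_logical_pauli_right)

text \<open>With one logical qubit, adjoining \<open>xb\<close> and \<open>zb\<close> to \<open>S\<close> gives a group of order
  \<open>4 |S| = 2^(n+1)\<close>, so its normaliser has order \<open>|S|\<close> and therefore is \<open>S\<close> itself.\<close>
lemma mem_stabiliser_if_commutes_logicals:
  fixes S :: "'b::finite pauli set"
  assumes code: "stabiliser_code S" and one: "encodes_logical_qubits S 1"
    and logicals: "xb \<in> normaliser S" "zb \<in> normaliser S" "anticommute xb zb"
    and D: "D \<in> normaliser S" "\<not> anticommute D xb" "\<not> anticommute D zb"
  shows "D \<in> S"
proof -
  let ?T = "adjoin_logicals S xb zb"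
  have "pid \<in> ?T"
    using stabiliser_codeD(1)[OF code] unfolding adjoin_logicals_def
    by (auto intro!: image_eqI[where x="(pid, False, False)"])
  moreover have "\<And>a b. a \<in> ?T \<Longrightarrow> b \<in> ?T \<Longrightarrow> pmult a b \<in> ?T"
    using pmult_mem_adjoin_logicals[OF stabiliser_codeD(2)[OF code]] .
  ultimately have "card (normaliser ?T) * card ?T = 2 ^ CARD('b) * 2 ^ CARD('b)"
    by (rule card_normaliser_mult_card)
  moreover have "2 ^ CARD('b) = card S * 2"
    using one by (simp add: encodes_logical_qubits_def)
  ultimately have "card (normaliser ?T) * (4 * card S) = card S * (4 * card S)"
    using card_adjoin_logicals[OF stabiliser_codeD(2)[OF code] logicals] by (simp add: ac_simps)
  moreover have "card S > 0"
    using stabiliser_codeD(1)[OF code] by (auto simp: card_gt_0_iff)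
  ultimately have "card (normaliser ?T) = card S"
    by auto
  moreover have "s \<in> normaliser ?T" if "s \<in> S" for s
  proof (rule mem_normaliser_adjoin_logicals)
    show "s \<in> normaliser S"
      using that stabiliser_codeD(3)[OF code] by (simp add: mem_normaliser_iff)
    show "\<not> anticommute s xb" "\<not> anticommute s zb"
      using that logicals(1,2) unfolding mem_normaliser_iff by (simp_all add: anticommute_sym[of s])
  qed
  ultimately have "normaliser ?T = S"
    by (intro card_subset_eq[symmetric]) auto
  with mem_normaliser_adjoin_logicals[OF D] show ?thesis
    by simp
qed

section \<open>Logical operators of the concatenated code\<close>

definition of_blocks :: "('a \<Rightarrow> 'b pauli) \<Rightarrow> ('a \<times> 'b) pauli" where
  "of_blocks B = (\<lambda>(q, j). fst (B q) j, \<lambda>(q, j). snd (B q) j)"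

lemma block_of_blocks [simp]: "block (of_blocks B) q = B q"
  by (simp add: block_def of_blocks_def)

lemma mem_support_of_blocks [simp]: "(q, j) \<in> support (of_blocks B) \<longleftrightarrow> j \<in> support (B q)"
  by (simp add: support_def of_blocks_def)

lemma support_pid [simp]: "support pid = {}"
  by (simp add: support_def pid_def)

lemma block_pmult: "block (pmult P Q) q = pmult (block P q) (block Q q)"
  by (simp add: block_def pmult_def)

lemma block_pid [simp]: "block pid q = pid"
  by (simp add: block_def pid_def)

lemma block_encode: "block (encode xb zb L) q = logical_pauli xb zb (fst L q) (snd L q)"
  by (simp add: block_def encode_def logical_pauli_def)

lemma encode_pmult: "encode xb zb (pmult L M) = pmult (encode xb zb L) (encode xb zb M)"
  by (auto simp: encode_def pmult_def)

lemma encode_pid [simp]: "encode xb zb pid = pid"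
  by (auto simp: encode_def pid_def)

lemma anticommute_iff_odd_card_blocks:
  fixes P Q :: "('a::finite \<times> 'b::finite) pauli"
  shows "anticommute P Q \<longleftrightarrow> odd (card {q. anticommute (block P q) (block Q q)})"
proof -
  define F where "F x \<longleftrightarrow> (fst P x \<and> snd Q x) \<noteq> (snd P x \<and> fst Q x)" for x
  have "anticommute P Q \<longleftrightarrow> odd (card {x. F x})"
    by (simp only: anticommute_iff_odd_card F_def)
  also have "{x. F x} = Sigma UNIV (\<lambda>q. {j. F (q, j)})"
    by auto
  also have "odd (card (Sigma UNIV (\<lambda>q. {j. F (q, j)}))) \<longleftrightarrow> odd (card {q. odd (card {j. F (q, j)})})"
    by (simp add: even_sum_iff)
  also have "(\<lambda>q. odd (card {j. F (q, j)})) = (\<lambda>q. anticommute (block P q) (block Q q))"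
    by (simp only: anticommute_iff_odd_card block_def F_def fst_conv snd_conv)
  finally show ?thesis .
qed

lemma anticommute_encode:
  assumes "anticommute xb zb"
  shows "anticommute (encode xb zb L) (encode xb zb M) \<longleftrightarrow> anticommute L M"
proof -
  have "anticommute (encode xb zb L) (encode xb zb M)
      \<longleftrightarrow> odd (card {q. anticommute (block (encode xb zb L) q) (block (encode xb zb M) q)})"
    by (rule anticommute_iff_odd_card_blocks)
  also have "\<dots> \<longleftrightarrow> odd (card {q. (fst L q \<and> snd M q) \<noteq> (snd L q \<and> fst M q)})"
    by (simp only: block_encode anticommute_logical_pauli[OF assms])
  finally show ?thesis
    by (simp only: anticommute_iff_odd_card)
qed

lemma mem_concat_codeI:
  assumes "s \<in> S1" and "\<And>q. block (pmult P (encode xb zb s)) q \<in> S2"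
  shows "P \<in> concat_code S1 S2 xb zb"
proof -
  have "P = pmult (encode xb zb s) (pmult P (encode xb zb s))"
    by (simp add: pmult_ac)
  with assms show ?thesis
    unfolding concat_code_def by blast
qed

definition logical_part :: "'b::finite pauli \<Rightarrow> 'b pauli \<Rightarrow> ('a \<times> 'b) pauli \<Rightarrow> 'a pauli" where
  "logical_part xb zb P = (\<lambda>q. anticommute (block P q) zb, \<lambda>q. anticommute (block P q) xb)"

lemma block_mem_normaliser:
  assumes "pid \<in> S1" "pid \<in> S2" and "P \<in> normaliser (concat_code S1 S2 xb zb)"
  shows "block P q \<in> normaliser S2"
  unfolding mem_normaliser_iff
proof
  fix s assume "s \<in> S2"
  let ?E = "of_blocks (\<lambda>q'. if q' = q then s else pid)"
  have "?E \<in> concat_code S1 S2 xb zb"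
    using \<open>s \<in> S2\<close> assms(1,2)
    by (intro mem_concat_codeI[where s=pid]) auto
  then have "\<not> anticommute P ?E"
    using assms(3) by (simp add: mem_normaliser_iff)
  moreover have "{q'. anticommute (block P q') (block ?E q')} = (if anticommute (block P q) s then {q} else {})"
    by auto
  ultimately show "\<not> anticommute (block P q) s"
    by (simp add: anticommute_iff_odd_card_blocks split: if_splits)
qed

lemma representative_concat_codeI:
  assumes closed: "\<And>a b. a \<in> S2 \<Longrightarrow> b \<in> S2 \<Longrightarrow> pmult a b \<in> S2"
    and "representative S1 L L'"
    and "\<And>q. block (pmult P (encode xb zb L)) q \<in> S2"
    and "\<And>q. block (pmult Q (encode xb zb L')) q \<in> S2"
  shows "representative (concat_code S1 S2 xb zb) P Q"
  unfolding representative_def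
proof (rule mem_concat_codeI)
  show "pmult L' L \<in> S1"
    using assms(2) by (simp add: representative_def)
  fix q
  have "block (pmult (pmult Q P) (encode xb zb (pmult L' L))) q
      = pmult (block (pmult Q (encode xb zb L')) q) (block (pmult P (encode xb zb L)) q)"
    by (simp add: block_pmult encode_pmult pmult_ac)
  then show "block (pmult (pmult Q P) (encode xb zb (pmult L' L))) q \<in> S2"
    using assms(3,4) closed by simp
qed

context
  fixes S1 :: "'a::finite pauli set" and S2 :: "'b::finite pauli set" and xb zb :: "'b pauli"
  assumes code1: "stabiliser_code S1" and code2: "stabiliser_code S2"
    and one: "encodes_logical_qubits S2 1"
    and logicals: "xb \<in> normaliser S2" "zb \<in> normaliser S2" "anticommute xb zb"
begin

lemma block_mult_encode_logical_part_mem: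
  assumes "P \<in> normaliser (concat_code S1 S2 xb zb)"
  shows "block (pmult P (encode xb zb (logical_part xb zb P))) q \<in> S2"
proof (rule mem_stabiliser_if_commutes_logicals[OF code2 one logicals])
  have "logical_pauli xb zb a b \<in> normaliser S2" for a b
    using logical_pauli_mem_normaliser logicals by blast
  then show "block (pmult P (encode xb zb (logical_part xb zb P))) q \<in> normaliser S2"
    using block_mem_normaliser[OF stabiliser_codeD(1)[OF code1] stabiliser_codeD(1)[OF code2] assms]
    by (simp add: block_pmult block_encode mem_normaliser_iff anticommute_pmult_left)
  show "\<not> anticommute (block (pmult P (encode xb zb (logical_part xb zb P))) q) xb"
    "\<not> anticommute (block (pmult P (encode xb zb (logical_part xb zb P))) q) zb"
    using logicals(3) anticommute_sym[of zb xb]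
    by (simp_all add: block_pmult block_encode logical_part_def anticommute_pmult_left
        anticommute_logical_pauli_left)
qed

lemma logical_part_mem_normaliser:
  assumes P: "P \<in> normaliser (concat_code S1 S2 xb zb)"
  shows "logical_part xb zb P \<in> normaliser S1"
  unfolding mem_normaliser_iff
proof
  fix s assume "s \<in> S1"
  let ?L = "logical_part xb zb P" and ?D = "pmult P (encode xb zb (logical_part xb zb P))"
  have "encode xb zb s \<in> concat_code S1 S2 xb zb"
    using \<open>s \<in> S1\<close> stabiliser_codeD(1)[OF code2] by (intro mem_concat_codeI) auto
  then have "\<not> anticommute P (encode xb zb s)"
    using P by (simp add: mem_normaliser_iff)
  moreover have "\<not> anticommute (block ?D q) (block (encode xb zb s) q)" for q
    using block_mult_encode_logical_part_mem[OF P, of q] logicals(1,2)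
    by (simp add: block_encode anticommute_logical_pauli_right mem_normaliser_iff
        anticommute_sym[of "block ?D q"])
  then have "\<not> anticommute ?D (encode xb zb s)"
    by (simp add: anticommute_iff_odd_card_blocks)
  moreover have "anticommute P (encode xb zb s) \<longleftrightarrow> anticommute ?D (encode xb zb s) \<noteq> anticommute ?L s"
    using anticommute_pmult_left[of ?D "encode xb zb ?L" "encode xb zb s"]
    by (simp add: anticommute_encode[OF logicals(3)])
  ultimately show "\<not> anticommute ?L s"
    by simp
qed

end

section \<open>Disjoint representatives\<close>

lemma div_mod_less_of_less_mult:
  fixes k m1 m2 :: nat
  shows "k < m1 * m2 \<Longrightarrow> k div m2 < m1 \<and> k mod m2 < m2"
  by (cases "m2 = 0") (auto simp: less_mult_imp_div_less)

lemma card_nested_indices_le: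
  fixes A :: "nat \<Rightarrow> bool" and B :: "nat \<Rightarrow> nat \<Rightarrow> bool"
  assumes "card {i. i < m1 \<and> A i} \<le> c1" and "\<And>i. card {j. j < m2 \<and> B i j} \<le> c2"
  shows "card {k. k < m1 * m2 \<and> A (k div m2) \<and> B (k div m2) (k mod m2)} \<le> c1 * c2"
proof -
  let ?I = "{i. i < m1 \<and> A i}" and ?J = "\<lambda>i. {j. j < m2 \<and> B i j}"
  have "{k. k < m1 * m2 \<and> A (k div m2) \<and> B (k div m2) (k mod m2)}
      \<subseteq> (\<lambda>(i, j). i * m2 + j) ` Sigma ?I ?J"
  proof
    fix k assume k: "k \<in> {k. k < m1 * m2 \<and> A (k div m2) \<and> B (k div m2) (k mod m2)}"
    then have "(k div m2, k mod m2) \<in> Sigma ?I ?J"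
      using div_mod_less_of_less_mult by auto
    then show "k \<in> (\<lambda>(i, j). i * m2 + j) ` Sigma ?I ?J"
      by (rule rev_image_eqI) simp
  qed
  moreover have "finite (Sigma ?I ?J)"
    by simp
  ultimately have "card {k. k < m1 * m2 \<and> A (k div m2) \<and> B (k div m2) (k mod m2)}
      \<le> card (Sigma ?I ?J)"
    by (meson card_image_le card_mono finite_imageI le_trans)
  also have "\<dots> = (\<Sum>i\<in>?I. card (?J i))"
    by simp
  also have "\<dots> \<le> card ?I * c2"
    using sum_mono[of ?I "\<lambda>i. card (?J i)" "\<lambda>_. c2"] assms(2) by simp
  also have "\<dots> \<le> c1 * c2"
    using assms(1) by simp
  finally show ?thesis .
qed

text \<open>Member \<open>k = i * m2 + j\<close> of the family replaces each single-qubit factor \<open>(a, b)\<close> of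
  \<open>R1 i\<close> by the \<open>j\<close>-th member \<open>R2 a b j\<close>.\<close>
definition nested_family ::
  "(nat \<Rightarrow> 'a pauli) \<Rightarrow> (bool \<Rightarrow> bool \<Rightarrow> nat \<Rightarrow> 'b pauli) \<Rightarrow> nat \<Rightarrow> nat
    \<Rightarrow> ('a \<times> 'b) pauli" where
  "nested_family R1 R2 m2 k =
     of_blocks (\<lambda>q. R2 (fst (R1 (k div m2)) q) (snd (R1 (k div m2)) q) (k mod m2))"

lemma c_disjoint_nested_family:
  assumes "c_disjoint c1 R1 m1" and "\<And>a b. c_disjoint c2 (R2 a b) m2"
    and "\<And>j. R2 False False j = pid"
  shows "c_disjoint (c1 * c2) (nested_family R1 R2 m2) (m1 * m2)"
  unfolding c_disjoint_def
proof
  fix x :: "'a \<times> 'b"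
  obtain q t where x: "x = (q, t)"
    by (cases x)
  define A where "A i \<longleftrightarrow> q \<in> support (R1 i)" for i
  define B where "B i j \<longleftrightarrow> t \<in> support (R2 (fst (R1 i) q) (snd (R1 i) q) j)" for i j
  have "B i j \<Longrightarrow> A i" for i j
    using assms(3) unfolding A_def B_def support_def
    by (cases "fst (R1 i) q"; cases "snd (R1 i) q") (auto simp: pid_def)
  then have "{k. k < m1 * m2 \<and> x \<in> support (nested_family R1 R2 m2 k)}
      \<subseteq> {k. k < m1 * m2 \<and> A (k div m2) \<and> B (k div m2) (k mod m2)}"
    by (auto simp: x nested_family_def B_def)
  then have "card {k. k < m1 * m2 \<and> x \<in> support (nested_family R1 R2 m2 k)}
      \<le> card {k. k < m1 * m2 \<and> A (k div m2) \<and> B (k div m2) (k mod m2)}"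
    by (rule card_mono[rotated]) simp
  also have "\<dots> \<le> c1 * c2"
  proof (rule card_nested_indices_le)
    show "card {i. i < m1 \<and> A i} \<le> c1"
      using assms(1) by (simp add: c_disjoint_def A_def)
    show "card {j. j < m2 \<and> B i j} \<le> c2" for i
      using assms(2) by (simp add: c_disjoint_def B_def)
  qed
  finally show "card {k. k < m1 * m2 \<and> x \<in> support (nested_family R1 R2 m2 k)} \<le> c1 * c2" .
qed

definition disjoint_counts :: "'q::finite pauli set \<Rightarrow> nat \<Rightarrow> nat set" where
  "disjoint_counts S c =
     {m. \<forall>P\<in>normaliser S. \<exists>R. (\<forall>i<m. representative S P (R i)) \<and> c_disjoint c R m}"

lemma zero_mem_disjoint_counts: "0 \<in> disjoint_counts S c"
  by (simp add: disjoint_counts_def c_disjoint_def)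

lemma mult_mem_disjoint_counts_concat_code:
  fixes S1 :: "'a::finite pauli set" and S2 :: "'b::finite pauli set"
  assumes code1: "stabiliser_code S1" and code2: "stabiliser_code S2"
    and one: "encodes_logical_qubits S2 1"
    and logicals: "xb \<in> normaliser S2" "zb \<in> normaliser S2" "anticommute xb zb"
    and m1: "m1 \<in> disjoint_counts S1 c1" and m2: "m2 \<in> disjoint_counts S2 c2"
  shows "m1 * m2 \<in> disjoint_counts (concat_code S1 S2 xb zb) (c1 * c2)"
  unfolding disjoint_counts_def
proof (intro CollectI ballI)
  fix P assume P: "P \<in> normaliser (concat_code S1 S2 xb zb)"
  let ?L = "logical_part xb zb P"
  obtain R1 where R1: "\<And>i. i < m1 \<Longrightarrow> representative S1 ?L (R1 i)" "c_disjoint c1 R1 m1"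
    using m1 logical_part_mem_normaliser[OF code1 code2 one logicals P]
    by (auto simp: disjoint_counts_def)
  have "\<forall>a b. \<exists>R. (\<forall>j<m2. representative S2 (logical_pauli xb zb a b) (R j)) \<and> c_disjoint c2 R m2"
    using m2 logical_pauli_mem_normaliser[OF logicals(1,2)] by (auto simp: disjoint_counts_def)
  then obtain R2 where R2: "\<And>a b j. j < m2 \<Longrightarrow> representative S2 (logical_pauli xb zb a b) (R2 a b j)"
    "\<And>a b. c_disjoint c2 (R2 a b) m2"
    by metis
  \<comment> \<open>the identity represents itself; this keeps blocks outside \<open>support (R1 i)\<close> trivial\<close>
  define R2' where "R2' a b = (if a \<or> b then R2 a b else (\<lambda>_. pid))" for a b
  have "c_disjoint c2 (R2' a b) m2" for a b
    using R2(2)[of a b] by (simp add: R2'_def c_disjoint_def)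
  then have "c_disjoint (c1 * c2) (nested_family R1 R2' m2) (m1 * m2)"
    using R1(2) by (intro c_disjoint_nested_family) (auto simp: R2'_def)
  moreover have "representative (concat_code S1 S2 xb zb) P (nested_family R1 R2' m2 k)"
    if "k < m1 * m2" for k
  proof (rule representative_concat_codeI)
    have "k div m2 < m1" "k mod m2 < m2"
      using that div_mod_less_of_less_mult by blast+
    then show "representative S1 ?L (R1 (k div m2))"
      and "block (pmult (nested_family R1 R2' m2 k) (encode xb zb (R1 (k div m2)))) q \<in> S2" for q
      using R1(1) R2(1) stabiliser_codeD(1)[OF code2]
      by (auto simp: nested_family_def block_pmult block_encode R2'_def representative_def)
  qed (use stabiliser_codeD(2)[OF code2]
        block_mult_encode_logical_part_mem[OF code1 code2 one logicals P] in auto)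
  ultimately show "\<exists>R. (\<forall>i<m1 * m2. representative (concat_code S1 S2 xb zb) P (R i))
      \<and> c_disjoint (c1 * c2) R (m1 * m2)"
    by blast
qed

lemma disj_c_eq_SUP:
  assumes "c \<ge> 1"
  shows "disj_c S c = (SUP m\<in>disjoint_counts S c. ereal (real m / real c))"
proof -
  have udisj_eq: "udisj S c = (SUP m\<in>disjoint_counts S c. enat m)"
    by (simp add: udisj_def disjoint_counts_def image_def setcompr_eq_image)
  have "ereal_of_enat (udisj S c) = (SUP m\<in>disjoint_counts S c. ereal (real m))"
    unfolding udisj_eq using zero_mem_disjoint_counts by (subst ereal_of_enat_SUP) auto
  moreover have "x / ereal (real c) = x * ereal (1 / real c)" for x
    using assms by (simp add: divide_ereal_def inverse_eq_divide)
  ultimately have "disj_c S c = (SUP m\<in>disjoint_counts S c. ereal (real m)) * ereal (1 / real c)"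
    by (simp add: disj_c_def)
  also have "\<dots> = (SUP m\<in>disjoint_counts S c. ereal (real m) * ereal (1 / real c))"
    by (rule Sup_ereal_mult_right') (use zero_mem_disjoint_counts in auto)
  finally show ?thesis
    by simp
qed

lemma disj_c_nonneg: "c \<ge> 1 \<Longrightarrow> 0 \<le> disj_c S c"
  unfolding disj_c_eq_SUP by (rule order.trans[OF _ SUP_upper[OF zero_mem_disjoint_counts]]) simp

lemma ereal_SUP_mult_SUP_le:
  fixes f :: "'i \<Rightarrow> ereal" and g :: "'j \<Rightarrow> ereal"
  assumes "I \<noteq> {}" and "J \<noteq> {}" and f_nonneg: "\<And>i. i \<in> I \<Longrightarrow> 0 \<le> f i"
    and g_nonneg: "\<And>j. j \<in> J \<Longrightarrow> 0 \<le> g j"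
    and le: "\<And>i j. i \<in> I \<Longrightarrow> j \<in> J \<Longrightarrow> f i * g j \<le> M"
  shows "(SUP i\<in>I. f i) * (SUP j\<in>J. g j) \<le> M"
proof -
  obtain j where "j \<in> J"
    using assms(2) by blast
  then have G_nonneg: "0 \<le> (SUP j\<in>J. g j)"
    using g_nonneg SUP_upper[of j J g] by (blast intro: order_trans)
  have "(SUP i\<in>I. f i) * (SUP j\<in>J. g j) = (SUP j\<in>J. g j) * (SUP i\<in>I. f i)"
    by (simp add: mult.commute)
  also have "\<dots> = (SUP i\<in>I. (SUP j\<in>J. g j) * f i)"
    by (rule SUP_ereal_mult_left[symmetric]) (use assms(1) f_nonneg G_nonneg in auto)
  also have "\<dots> \<le> M"
  proof (rule SUP_least)
    fix i assume "i \<in> I"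
    have "(SUP j\<in>J. g j) * f i = f i * (SUP j\<in>J. g j)"
      by (simp add: mult.commute)
    also have "\<dots> = (SUP j\<in>J. f i * g j)"
      by (rule SUP_ereal_mult_left[symmetric]) (use assms(2) g_nonneg f_nonneg \<open>i \<in> I\<close> in auto)
    also have "\<dots> \<le> M"
      by (rule SUP_least) (use le \<open>i \<in> I\<close> in auto)
    finally show "(SUP j\<in>J. g j) * f i \<le> M" .
  qed
  finally show ?thesis .
qed

lemma disj_c_mult_le_concat_code:
  fixes S1 :: "'a::finite pauli set" and S2 :: "'b::finite pauli set"
  assumes code1: "stabiliser_code S1" and code2: "stabiliser_code S2"
    and one: "encodes_logical_qubits S2 1"
    and logicals: "xb \<in> normaliser S2" "zb \<in> normaliser S2" "anticommute xb zb"
    and "c1 \<ge> 1" "c2 \<ge> 1"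
  shows "disj_c S1 c1 * disj_c S2 c2 \<le> disj_c (concat_code S1 S2 xb zb) (c1 * c2)"
  unfolding disj_c_eq_SUP[OF \<open>c1 \<ge> 1\<close>] disj_c_eq_SUP[OF \<open>c2 \<ge> 1\<close>]
proof (rule ereal_SUP_mult_SUP_le)
  let ?K = "concat_code S1 S2 xb zb"
  fix m1 m2 assume "m1 \<in> disjoint_counts S1 c1" "m2 \<in> disjoint_counts S2 c2"
  then have "m1 * m2 \<in> disjoint_counts ?K (c1 * c2)"
    by (rule mult_mem_disjoint_counts_concat_code[OF code1 code2 one logicals])
  then have "ereal (real (m1 * m2) / real (c1 * c2))
      \<le> (SUP m\<in>disjoint_counts ?K (c1 * c2). ereal (real m / real (c1 * c2)))"
    by (rule SUP_upper)
  also have "\<dots> = disj_c ?K (c1 * c2)"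
    by (rule disj_c_eq_SUP[symmetric]) (use assms(7,8) in simp)
  finally show "ereal (real m1 / real c1) * ereal (real m2 / real c2) \<le> disj_c ?K (c1 * c2)"
    by simp
qed (use zero_mem_disjoint_counts in auto)

theorem lemma5:
  fixes S1 :: "'a::finite pauli set" and S2 :: "'b::finite pauli set"
    and xb zb :: "'b pauli"
  assumes "stabiliser_code S1"
    and "stabiliser_code S2"
    and "encodes_logical_qubits S2 1"
    and "xb \<in> normaliser S2" and "zb \<in> normaliser S2"
    and "\<not> commute xb zb"
  shows "disjointness (concat_code S1 S2 xb zb) \<ge> disjointness S1 * disjointness S2"
proof -
  let ?K = "concat_code S1 S2 xb zb"
  have "anticommute xb zb"
    using assms(6) by (simp add: anticommute_def)
  have "disj_c S1 c1 * disj_c S2 c2 \<le> disjointness ?K" if "c1 \<ge> 1" "c2 \<ge> 1" for c1 c2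
  proof -
    have "disj_c S1 c1 * disj_c S2 c2 \<le> disj_c ?K (c1 * c2)"
      using disj_c_mult_le_concat_code[OF assms(1-5) \<open>anticommute xb zb\<close> that] .
    also have "\<dots> \<le> disjointness ?K"
      unfolding disjointness_def using that by (intro SUP_upper) simp
    finally show ?thesis .
  qed
  then show ?thesis
    unfolding disjointness_def[of S1] disjointness_def[of S2]
    by (intro ereal_SUP_mult_SUP_le) (auto intro: disj_c_nonneg)
qed

end
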